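(* Let $S=(N,M_0)$ be a live Petri net system. If the potential reachability graph of $S$ is initially directed, i.e. for every marking $M_1\in PR(S)$ there is a marking reachable both from $M_0$ and from $M_1$, then $S$ is strongly live, i.e. for every $M\in PR(S)$ the system $(N,M)$ is live.
   Context: A Petri net is $N=(P,T,W)$ with finite disjoint sets of places $P$ and transitions $T$ and weights $W:(P\times T)\cup(T\times P)\to\mathbb{N}$. A marking is a map $P\to\mathbb{N}$. A transition $t$ is enabled at $M$ if $M(p)\ge W(p,t)$ for all $p$; firing it yields $M+I[\cdot,t]$ where the incidence matrix is $I(p,t)=W(t,p)-W(p,t)$. Reachability from a marking means reachability by a finite sequence of successive firings. $PR(S)=\{M\in\mathbb{N}^{P} : \exists Y\in\mathbb{N}^{T},\ M=M_0+I\cdot Y\}$ is the set of potentially reachable markings. A system $(N,M)$ is live if for every transition $t$ and every marking $M'$ reachable from $M$, some marking reachable from $M'$ enables $t$. *)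

theory Defs
  imports Main
begin

text \<open>A Petri net with finite place type 'p and finite transition type 't.
  pre t p = W(p,t) (arc from place p to transition t),
  post t p = W(t,p) (arc from transition t to place p).\<close>

record ('p, 't) petri_net =
  pre  :: "'t \<Rightarrow> 'p \<Rightarrow> nat"
  post :: "'t \<Rightarrow> 'p \<Rightarrow> nat"

type_synonym 'p marking = "'p \<Rightarrow> nat"

definition incidence :: "('p, 't) petri_net \<Rightarrow> 'p \<Rightarrow> 't \<Rightarrow> int" where
  "incidence N p t = int (post N t p) - int (pre N t p)"

definition enabled :: "('p, 't) petri_net \<Rightarrow> 'p marking \<Rightarrow> 't \<Rightarrow> bool" where
  "enabled N M t \<longleftrightarrow> (\<forall>p. M p \<ge> pre N t p)"

definition fire :: "('p, 't) petri_net \<Rightarrow> 'p marking \<Rightarrow> 't \<Rightarrow> 'p marking" where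
  "fire N M t = (\<lambda>p. M p - pre N t p + post N t p)"

definition step :: "('p, 't) petri_net \<Rightarrow> 'p marking \<Rightarrow> 'p marking \<Rightarrow> bool" where
  "step N M M' \<longleftrightarrow> (\<exists>t. enabled N M t \<and> M' = fire N M t)"

definition reachable :: "('p, 't) petri_net \<Rightarrow> 'p marking \<Rightarrow> 'p marking \<Rightarrow> bool" where
  "reachable N M M' \<longleftrightarrow> (step N)\<^sup>*\<^sup>* M M'"

definition PR :: "('p, 't::finite) petri_net \<Rightarrow> 'p marking \<Rightarrow> 'p marking set" where
  "PR N M0 = {M. \<exists>Y :: 't \<Rightarrow> nat. \<forall>p. int (M p) = int (M0 p) + (\<Sum>t\<in>UNIV. incidence N p t * int (Y t))}"

definition live :: "('p, 't) petri_net \<Rightarrow> 'p marking \<Rightarrow> bool" where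
  "live N M \<longleftrightarrow> (\<forall>t M'. reachable N M M' \<longrightarrow> (\<exists>M''. reachable N M' M'' \<and> enabled N M'' t))"

definition initially_directed_PR :: "('p, 't::finite) petri_net \<Rightarrow> 'p marking \<Rightarrow> bool" where
  "initially_directed_PR N M0 \<longleftrightarrow>
     (\<forall>M1 \<in> PR N M0. \<exists>M. reachable N M0 M \<and> reachable N M1 M)"

definition strongly_live :: "('p, 't::finite) petri_net \<Rightarrow> 'p marking \<Rightarrow> bool" where
  "strongly_live N M0 \<longleftrightarrow> (\<forall>M \<in> PR N M0. live N M)"

end

theory Submission
  imports Defs
begin

text \<open>The set \<open>PR N M0\<close> is closed under firing, since firing \<open>t\<close> adds the column \<open>I[\<cdot>,t]\<close>
  and so only increments the count vector \<open>Y\<close> at \<open>t\<close>. Hence every marking reachable from a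
  marking of \<open>PR N M0\<close> can, by initial directedness, be led back into the reachability set
  of \<open>M0\<close>, where liveness of \<open>M0\<close> enables any transition.\<close>

lemma reachable_trans:
  "reachable N M M' \<Longrightarrow> reachable N M' M'' \<Longrightarrow> reachable N M M''"
  unfolding reachable_def by (rule rtranclp_trans)

lemma fire_incidence:
  assumes "enabled N M t"
  shows "int (fire N M t p) = int (M p) + incidence N p t"
proof -
  have "pre N t p \<le> M p" using assms unfolding enabled_def by blast
  then show ?thesis by (simp add: fire_def incidence_def of_nat_diff)
qed

lemma PR_step:
  fixes N :: "('p, 't::finite) petri_net"
  assumes "M \<in> PR N M0" and "step N M M'"
  shows "M' \<in> PR N M0"
proof -
  obtain Y :: "'t \<Rightarrow> nat"
    where Y: "\<And>p. int (M p) = int (M0 p) + (\<Sum>s\<in>UNIV. incidence N p s * int (Y s))"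
    using assms(1) unfolding PR_def by blast
  obtain t where en: "enabled N M t" and M': "M' = fire N M t"
    using assms(2) unfolding step_def by blast
  define Y' where "Y' = Y(t := Suc (Y t))"
  have "int (M' p) = int (M0 p) + (\<Sum>s\<in>UNIV. incidence N p s * int (Y' s))" for p
  proof -
    have "(\<Sum>s\<in>UNIV. incidence N p s * int (Y' s))
        = (\<Sum>s\<in>UNIV. incidence N p s * int (Y s) + (if s = t then incidence N p s else 0))"
      by (rule sum.cong) (auto simp: Y'_def algebra_simps)
    also have "\<dots> = (\<Sum>s\<in>UNIV. incidence N p s * int (Y s)) + incidence N p t"
      by (simp add: sum.distrib)
    finally show ?thesis
      using Y[of p] fire_incidence[OF en, of p] by (simp add: M')
  qed
  then show ?thesis unfolding PR_def by blast
qed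

lemma PR_reachable:
  fixes N :: "('p, 't::finite) petri_net"
  assumes "reachable N M M'" and "M \<in> PR N M0"
  shows "M' \<in> PR N M0"
  using assms(1)[unfolded reachable_def] assms(2)
  by (induction rule: rtranclp_induct) (auto intro: PR_step)

lemma live_if_reachable_joins_live:
  assumes "live N M0"
    and "\<And>M'. reachable N M M' \<Longrightarrow> \<exists>M''. reachable N M0 M'' \<and> reachable N M' M''"
  shows "live N M"
  unfolding live_def
proof (intro allI impI)
  fix t M'
  assume "reachable N M M'"
  then obtain M'' where "reachable N M0 M''" and M'_M'': "reachable N M' M''"
    using assms(2) by blast
  then obtain M3 where "reachable N M'' M3" and "enabled N M3 t"
    using assms(1) unfolding live_def by blast
  then show "\<exists>M3. reachable N M' M3 \<and> enabled N M3 t"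
    using M'_M'' reachable_trans by blast
qed

theorem mainTheorem2:
  fixes N :: "('p::finite, 't::finite) petri_net" and M0 :: "'p marking"
  assumes "live N M0"
    and "initially_directed_PR N M0"
  shows "strongly_live N M0"
  unfolding strongly_live_def
proof
  fix M
  assume "M \<in> PR N M0"
  then have "\<exists>M''. reachable N M0 M'' \<and> reachable N M' M''" if "reachable N M M'" for M'
    using PR_reachable[OF that] assms(2) unfolding initially_directed_PR_def by blast
  then show "live N M"
    using live_if_reachable_joins_live[OF assms(1)] by blast
qed

end
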